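(* Let $0 \leq a \leq b \leq 1$ and $r \in (0,3)$. For any $\rho \geq r$ and $t \geq \frac1{200}$, \[ K_t(\rho) = \begin{cases} O\!\left(\frac{t}{r^2}\exp\!\Big(-t^2\delta_b^2 - \frac{\rho^{4/3}}{8t^{2/3}}\Big)\right) & \text{if } \rho \geq 6t^2,\\[2mm] O\!\left(\frac{t}{r^2}\exp\!\Big(-t^2\delta_b^2 + t^2 - \frac{\rho^{4/3}}{8t^{2/3}}\Big)\right) & \text{if } \rho \leq 6t^2, \end{cases} \] where $\delta_b = \max(\frac14-b,0)$.
   Context: For $0\le a\le b$ and $t>0$, let $f_t(\lambda) = \frac{t}{\sqrt\pi}\int_a^b\exp(-t^2(\lambda-\mu)^2)\,d\mu$, $h_t(r) = f_t(\frac14+r^2)$, $g_t(u) = \frac{1}{2\pi}\int_{-\infty}^{+\infty}h_t(r)e^{iru}\,dr$, and define the kernel \[ K_t(\rho) = -\frac{1}{\sqrt2\,\pi}\int_\rho^{+\infty}\frac{g_t'(u)}{\sqrt{\cosh u - \cosh\rho}}\,du, \qquad \rho>0. \] $T_1 = O(T_2)$ means $|T_1|\le CT_2$ with a universal constant $C$ independent of all parameters. *)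

theory Defs
  imports "HOL-Analysis.Analysis"
begin

definition f_t :: "real \<Rightarrow> real \<Rightarrow> real \<Rightarrow> real \<Rightarrow> real" where
  "f_t a b t lam = t / sqrt pi * integral {a..b} (\<lambda>mu. exp (- (t\<^sup>2 * (lam - mu)\<^sup>2)))"

definition h_t :: "real \<Rightarrow> real \<Rightarrow> real \<Rightarrow> real \<Rightarrow> real" where
  "h_t a b t r = f_t a b t (1/4 + r\<^sup>2)"

definition g_t :: "real \<Rightarrow> real \<Rightarrow> real \<Rightarrow> real \<Rightarrow> complex" where
  "g_t a b t u = complex_of_real (1 / (2 * pi)) *
     (LINT r|lborel. complex_of_real (h_t a b t r) * exp (\<i> * complex_of_real (r * u)))"

definition K_t :: "real \<Rightarrow> real \<Rightarrow> real \<Rightarrow> real \<Rightarrow> complex" where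
  "K_t a b t rho = complex_of_real (- 1 / (sqrt 2 * pi)) *
     (LINT u:{rho<..}|lborel. vector_derivative (g_t a b t) (at u)
                                / complex_of_real (sqrt (cosh u - cosh rho)))"

end

theory Submission
  imports
    Defs
    "HOL-Complex_Analysis.Complex_Analysis"
    "HOL-Probability.Probability"
    "HOL-Real_Asymp.Real_Asymp"
begin

(* The multiplier h_t extends to the entire function
     H(z) = t / sqrt pi * int_a^b exp (- t^2 (1/4 + z^2 - mu)^2) dmu,
   which on the line Im z = y is bounded by
     t exp (- t^2 (delta_b^2 + (r^2 - y^2)^2 / 4 - 20 y^4 - y^2 / 2 - 9/16)).
   Hence g_t is differentiable with g_t'(u) = 1/(2 pi) int h_t(r) i r e^{i r u} dr, and shifting
   this integral to the line Im z = y gains the factor e^{- y u} at the cost of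
   e^{t^2 (81/4 y^4 + y^2/2 + 9/16)}. Writing u = t^2 Y^3, the choice y = Y/4 gives
   |g_t'(u)| <~ t e^{- t^2 delta_b^2 - t^2 Y^4 / 8} as soon as Y^3 >= 30, while for smaller Y the
   trivial bound |g_t'| <~ t e^{t^2 (9/16 - delta_b^2)} together with the factor e^{- rho/2} below
   suffices. Finally cosh u - cosh rho >= (u - rho) (r/7) e^rho near rho and >= e^u / 16 beyond rho + 1,
   so the Abel transform defining K_t costs at most (100 / r^2) e^{- rho/2} sup_{u > rho} |g_t'(u)|.
   With Y = rho^(1/3) / t^(2/3) one has t^2 Y^4 / 8 = rho^(4/3) / (8 t^(2/3)). *)

lemma abs_le_one_plus_square: "\<bar>x::real\<bar> \<le> 1 + x\<^sup>2"
proof -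
  have "0 \<le> (\<bar>x\<bar> - 1/2)\<^sup>2" by simp
  then show ?thesis by (simp add: power2_eq_square algebra_simps)
qed

lemma exp_neg_quartic_le_gaussian:
  fixes t x \<alpha> :: real
  assumes "t \<ge> 1/200" "\<alpha> > 0"
  shows "exp (- (\<alpha> * t\<^sup>2 * x^4)) \<le> exp (2500/\<alpha>) * exp (- (x\<^sup>2/2))"
proof -
  have "t\<^sup>2 \<ge> (1/200)\<^sup>2" using assms by (intro power_mono) auto
  then have "\<alpha> * t\<^sup>2 * x^4 \<ge> \<alpha> * (1/40000) * x^4" using assms
    by (intro mult_right_mono mult_left_mono) (auto simp: power2_eq_square)
  moreover have "\<alpha> * (1/40000) * x^4 - x\<^sup>2/2 + 2500/\<alpha> = \<alpha>/40000 * (x\<^sup>2 - 10000/\<alpha>)\<^sup>2"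
    using assms by (simp add: power2_eq_square power4_eq_xxxx field_simps)
  moreover have "\<alpha>/40000 * (x\<^sup>2 - 10000/\<alpha>)\<^sup>2 \<ge> 0" using assms by simp
  ultimately have "- (\<alpha> * t\<^sup>2 * x^4) \<le> 2500/\<alpha> + (- (x\<^sup>2/2))" by linarith
  then show ?thesis by (simp flip: exp_add)
qed

lemma norm_iexp_sub_linear_le: "cmod (exp (\<i> * complex_of_real x) - 1 - \<i> * complex_of_real x) \<le> x\<^sup>2/2"
  using iexp_approx1[of x 1] by (simp add: power2_eq_square algebra_simps)

lemma sqrt_exp: "sqrt (exp (x::real)) = exp (x/2)"
proof -
  have "exp (x/2) ^ 2 = exp x" by (simp add: power2_eq_square flip: exp_add)
  then show ?thesis by (metis real_sqrt_abs abs_exp_cancel)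
qed

lemma cube_le_6_imp_exponent_le:
  fixes Y :: real
  assumes "0 < Y" "Y^3 \<le> 6"
  shows "9/16 - Y^3/2 \<le> 1 - Y^4/8"
proof -
  have "Y < 4"
  proof (rule ccontr)
    assume "\<not> Y < 4"
    then have "4^3 \<le> Y^3" by (intro power_mono) auto
    then show False using assms by simp
  qed
  then have "Y^4 \<le> 4 * Y^3"
    using assms by (simp add: power4_eq_xxxx power3_eq_cube mult_right_mono)
  then show ?thesis by (simp add: field_simps)
qed

lemma cube_between_6_30_imp_exponent_le:
  fixes Y :: real
  assumes "0 < Y" "6 \<le> Y^3" "Y^3 \<le> 30"
  shows "9/16 - Y^3/2 \<le> - (Y^4/8)"
proof -
  have "Y \<le> 311/100"
  proof (rule ccontr)
    assume "\<not> Y \<le> 311/100"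
    then have "(311/100)^3 < Y^3" by (intro power_strict_mono) auto
    then show False using assms by (simp add: power3_eq_cube)
  qed
  then have "Y^4 \<le> (311/100) * Y^3"
    using assms by (simp add: power4_eq_xxxx power3_eq_cube mult_right_mono)
  then show ?thesis using assms by (simp add: field_simps)
qed

lemma cube_ge_30_imp_shifted_exponent_le:
  fixes Y :: real
  assumes "0 < Y" "30 \<le> Y^3"
  shows "81/4 * (Y/4)^4 + (Y/4)\<^sup>2/2 + 9/16 - (Y/4) * Y^3 \<le> - (Y^4/8) - Y^4/32"
proof -
  have "31/10 \<le> Y"
  proof (rule ccontr)
    assume "\<not> 31/10 \<le> Y"
    then have "Y^3 < (31/10)^3" using assms by (intro power_strict_mono) auto
    then show False using assms by (simp add: power3_eq_cube)
  qed
  then have "(31/10)\<^sup>2 \<le> Y\<^sup>2" by (rule power_mono) simp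
  then have Y2: "961/100 \<le> Y\<^sup>2" by (simp add: power2_eq_square)
  have "(961/100) * Y\<^sup>2 \<le> Y\<^sup>2 * Y\<^sup>2" using Y2 by (intro mult_right_mono) auto
  also have "\<dots> = Y^4" by (simp add: power4_eq_xxxx power2_eq_square)
  finally have Y4: "(961/100) * Y\<^sup>2 \<le> Y^4" .
  have "(Y/4)^4 = Y^4/256" "(Y/4)\<^sup>2 = Y\<^sup>2/16" "(Y/4) * Y^3 = Y^4/4"
    by (simp_all add: power_divide power4_eq_xxxx power3_eq_cube)
  then show ?thesis using Y2 Y4 by (simp add: field_simps)
qed

lemma linear_times_exp_neg_quartic_le:
  fixes Y t :: real
  assumes "1 \<le> Y" "t \<ge> 1/200"
  shows "(1 + Y/4) * exp (- (t\<^sup>2 * Y^4 / 32)) \<le> 1280001"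
proof -
  define x where "x = Y^4 / 1280000"
  have x0: "x \<ge> 0" unfolding x_def by simp
  have "t\<^sup>2 \<ge> (1/200)\<^sup>2" using assms by (intro power_mono) auto
  then have "t\<^sup>2 * Y^4 / 32 \<ge> (1/200)\<^sup>2 * Y^4 / 32" by (intro divide_right_mono mult_right_mono) auto
  then have "exp (- (t\<^sup>2 * Y^4 / 32)) \<le> exp (- x)" unfolding x_def by (simp add: power2_eq_square)
  moreover have "1 + Y/4 \<le> 1 + 1280000 * x"
    using power_increasing[of 1 4 Y] assms unfolding x_def by simp
  ultimately have "(1 + Y/4) * exp (- (t\<^sup>2 * Y^4 / 32)) \<le> (1 + 1280000 * x) * exp (- x)"
    using assms by (intro mult_mono) auto
  also have "\<dots> = exp (- x) + 1280000 * (x * exp (- x))" by (simp add: algebra_simps)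
  also have "\<dots> \<le> 1 + 1280000 * 1"
  proof (intro add_mono mult_left_mono)
    show "exp (- x) \<le> 1" using x0 by simp
    have "x \<le> exp x" using exp_ge_add_one_self[of x] by linarith
    then show "x * exp (- x) \<le> 1" by (simp add: exp_minus field_simps)
  qed auto
  finally show ?thesis by simp
qed

lemma cube_root_scaling:
  fixes x t :: real
  assumes "0 < x" "0 < t"
  obtains Y where "0 < Y" "x = t\<^sup>2 * Y^3" "x powr (4/3) / (8 * t powr (2/3)) = t\<^sup>2 * Y^4 / 8"
proof
  define Y where "Y = x powr (1/3) / t powr (2/3)"
  show "0 < Y" unfolding Y_def using assms by simp
  have "(x powr (1/3))^3 = x" "(t powr (2/3))^3 = t\<^sup>2"
    using assms by (simp_all add: powr_power powr_numeral)
  then show "x = t\<^sup>2 * Y^3" unfolding Y_def power_divide using assms by simp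
  have "(x powr (1/3))^4 = x powr (4/3)" using assms by (simp add: powr_power)
  moreover have "(t powr (2/3))^4 = t\<^sup>2 * t powr (2/3)"
  proof -
    have "(t powr (2/3))^4 = t powr (2 + 2/3)" using assms by (simp add: powr_power)
    also have "\<dots> = t powr 2 * t powr (2/3)" by (rule powr_add)
    also have "\<dots> = t\<^sup>2 * t powr (2/3)" using assms by (simp add: powr_numeral)
    finally show ?thesis .
  qed
  ultimately show "x powr (4/3) / (8 * t powr (2/3)) = t\<^sup>2 * Y^4 / 8"
    unfolding Y_def power_divide using assms by simp
qed

section \<open>The kernel of the Abel transform\<close>

lemma cosh_add_sub_cosh_ge:
  fixes rho v :: real
  assumes "0 \<le> v"
  shows "v * sinh rho \<le> cosh (rho + v) - cosh rho"
proof -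
  have "v \<le> exp v - 1" "-v \<le> exp (-v) - 1"
    using exp_ge_add_one_self[of v] exp_ge_add_one_self[of "-v"] by linarith+
  then have "exp rho * v + exp (-rho) * (-v) \<le> exp rho * (exp v - 1) + exp (-rho) * (exp (-v) - 1)"
    by (intro add_mono mult_left_mono) auto
  moreover have "v * sinh rho = (exp rho * v + exp (-rho) * (-v)) / 2"
    by (simp add: sinh_field_def algebra_simps)
  moreover have "cosh (rho + v) - cosh rho = (exp rho * (exp v - 1) + exp (-rho) * (exp (-v) - 1)) / 2"
  proof -
    have "exp (- (rho + v)) = exp (- rho) * exp (- v)" by (simp flip: exp_add)
    then show ?thesis unfolding cosh_field_def exp_add by (simp add: field_simps)
  qed
  ultimately show ?thesis by argo
qed

lemma sinh_ge_exp_scaled: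
  fixes r rho :: real
  assumes "0 < r" "r < 3" "r \<le> rho"
  shows "r/7 * exp rho \<le> sinh rho"
proof -
  have "(1 + 2*r) * (1 - 2*r/7) = 1 + 4/7 * (r * (3 - r))" by (simp add: field_simps)
  moreover have "0 \<le> r * (3 - r)" using assms by simp
  ultimately have "1 \<le> (1 + 2*r) * (1 - 2*r/7)" by linarith
  also have "\<dots> \<le> exp (2*rho) * (1 - 2*r/7)"
  proof (rule mult_right_mono)
    show "1 + 2*r \<le> exp (2*rho)" using exp_ge_add_one_self[of "2*rho"] assms by linarith
  qed (use assms in simp)
  also have "exp (2*rho) = exp rho * exp rho" by (simp flip: exp_add)
  finally have "1 \<le> exp rho * (exp rho * (1 - 2*r/7))" by (simp only: mult.assoc)
  then have "exp (-rho) \<le> exp rho * (1 - 2*r/7)" by (simp add: exp_minus field_simps)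
  then show ?thesis by (simp add: sinh_field_def field_simps)
qed

lemma cosh_sub_cosh_ge_exp:
  fixes rho u :: real
  assumes "0 \<le> rho" "rho + 1 \<le> u"
  shows "exp u / 16 \<le> cosh u - cosh rho"
proof -
  have e: "5/2 \<le> exp (1::real)" using exp_lower_Taylor_quadratic[of 1] by simp
  have "exp rho * (5/2) \<le> exp rho * exp 1" using e by simp
  also have "\<dots> \<le> exp u" using assms by (simp flip: exp_add)
  finally have "exp rho \<le> 2/5 * exp u" by simp
  moreover have "5/2 \<le> exp u" using e assms order_trans[of "5/2" "exp 1" "exp u"] by simp
  moreover have "exp (-rho) \<le> 1" "0 < exp (-u)" using assms by simp_all
  moreover have "cosh u - cosh rho = (exp u + exp (-u) - exp rho - exp (-rho)) / 2"
    by (simp add: cosh_field_def field_simps)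
  ultimately show ?thesis by argo
qed

lemma inverse_sqrt_cosh_sub_cosh_le_near:
  fixes r rho u :: real
  assumes "0 < r" "r < 3" "r \<le> rho" "rho < u"
  shows "1 / sqrt (cosh u - cosh rho) \<le> sqrt (7/r) * exp (- rho/2) / sqrt (u - rho)"
proof -
  have pos: "0 < (u - rho) * (r/7) * exp rho" using assms by simp
  have "(u - rho) * (r/7) * exp rho \<le> (u - rho) * sinh rho"
    using sinh_ge_exp_scaled[of r rho] assms by (simp add: mult.assoc mult_left_mono)
  also have "\<dots> \<le> cosh u - cosh rho" using cosh_add_sub_cosh_ge[of "u - rho" rho] assms by simp
  finally have "1 / sqrt (cosh u - cosh rho) \<le> 1 / sqrt ((u - rho) * (r/7) * exp rho)"
    using pos by (intro divide_left_mono real_sqrt_le_mono mult_pos_pos) auto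
  also have "sqrt ((u - rho) * (r/7) * exp rho) = sqrt (u - rho) * sqrt (r/7) * exp (rho/2)"
    by (simp only: real_sqrt_mult sqrt_exp)
  also have "1 / (sqrt (u - rho) * sqrt (r/7) * exp (rho/2)) = sqrt (7/r) * exp (- rho/2) / sqrt (u - rho)"
    by (simp add: real_sqrt_divide exp_minus field_simps)
  finally show ?thesis .
qed

lemma inverse_sqrt_cosh_sub_cosh_le_far:
  fixes rho u :: real
  assumes "0 \<le> rho" "rho + 1 \<le> u"
  shows "1 / sqrt (cosh u - cosh rho) \<le> 4 * exp (- u/2)"
proof -
  have "exp u / 16 \<le> cosh u - cosh rho" using cosh_sub_cosh_ge_exp assms .
  moreover have "0 < cosh u - cosh rho" using calculation exp_gt_zero[of u] by argo
  ultimately have "1 / sqrt (cosh u - cosh rho) \<le> 1 / sqrt (exp u / 16)"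
    by (intro divide_left_mono real_sqrt_le_mono mult_pos_pos) auto
  also have "\<dots> = 4 * exp (- u/2)"
    by (simp add: real_sqrt_divide sqrt_exp exp_minus field_simps)
  finally show ?thesis .
qed

lemma has_integral_inverse_sqrt: "((\<lambda>u. 1 / sqrt (u - rho)) has_integral 2) {rho..rho+1}"
proof -
  have "((\<lambda>u. 1 / sqrt (u - rho)) has_integral (2 * sqrt ((rho + 1) - rho) - 2 * sqrt (rho - rho))) {rho..rho+1}"
  proof (rule fundamental_theorem_of_calculus_interior)
    show "continuous_on {rho..rho + 1} (\<lambda>u. 2 * sqrt (u - rho))" by (intro continuous_intros)
    fix x assume "x \<in> {rho<..<rho + 1}"
    then show "((\<lambda>u. 2 * sqrt (u - rho)) has_vector_derivative 1 / sqrt (x - rho)) (at x)"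
      unfolding has_real_derivative_iff_has_vector_derivative[symmetric]
      by (auto intro!: derivative_eq_intros simp: field_simps)
  qed simp
  then show ?thesis by simp
qed

lemma sqrt_7_div_plus_le_100_div_square:
  fixes r :: real
  assumes "0 < r" "r < 3"
  shows "2 * sqrt (7/r) + 8 \<le> 100 / r\<^sup>2"
proof -
  have "r^3 \<le> 3^3" using assms by (intro power_mono) auto
  then have "7/r \<le> (14/r\<^sup>2)\<^sup>2" using assms by (simp add: field_simps power2_eq_square power3_eq_cube)
  then have "sqrt (7/r) \<le> sqrt ((14/r\<^sup>2)\<^sup>2)" by (rule real_sqrt_le_mono)
  also have "\<dots> = 14/r\<^sup>2" using assms by simp
  finally have "sqrt (7/r) \<le> 14/r\<^sup>2" .
  moreover have "r\<^sup>2 \<le> 3\<^sup>2" using assms by (intro power_mono) auto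
  then have "8 \<le> 72 / r\<^sup>2" using assms by (simp add: field_simps)
  ultimately show ?thesis by (simp add: field_simps)
qed

lemma ennreal_inverse_sqrt_cosh_sub_cosh_le:
  fixes r rho u :: real
  assumes r: "0 < r" "r < 3" "r \<le> rho"
  shows "ennreal (indicator {rho<..} u / sqrt (cosh u - cosh rho))
    \<le> ennreal (sqrt (7/r) * exp (- rho/2) / sqrt (u - rho)) * indicator {rho..rho+1} u
      + ennreal (4 * exp (- u/2)) * indicator {rho+1..} u"
proof (cases "rho < u")
  case True
  show ?thesis
  proof (cases "u \<le> rho + 1")
    case True2: True
    then have "ennreal (indicator {rho<..} u / sqrt (cosh u - cosh rho))
        \<le> ennreal (sqrt (7/r) * exp (- rho/2) / sqrt (u - rho)) * indicator {rho..rho+1} u"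
      using True inverse_sqrt_cosh_sub_cosh_le_near[OF r True] by (simp add: ennreal_leI)
    then show ?thesis by (intro add_increasing2) auto
  next
    case False
    then show ?thesis using True r inverse_sqrt_cosh_sub_cosh_le_far[of rho u] by simp
  qed
qed simp

lemma nn_integral_inverse_sqrt_cosh_sub_cosh_le:
  fixes r rho :: real
  assumes r: "0 < r" "r < 3" "r \<le> rho"
  shows "(\<integral>\<^sup>+u. ennreal (indicator {rho<..} u / sqrt (cosh u - cosh rho)) \<partial>lborel)
    \<le> ennreal (100 / r\<^sup>2 * exp (- rho/2))"
proof -
  define A where "A = sqrt (7/r) * exp (- rho/2)"
  define w1 where "w1 u = A / sqrt (u - rho)" for u
  define w2 where "w2 u = 4 * exp (- u/2)" for u :: real
  define S1 where "S1 = {rho..rho+1}"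
  define S2 where "S2 = {rho+1..}"
  have "(w1 has_integral A * 2) S1" unfolding w1_def S1_def
    using has_integral_mult_right[OF has_integral_inverse_sqrt, of A] by simp
  moreover have "0 \<le> w1 u" if "u \<in> S1" for u
    using that r unfolding w1_def A_def S1_def by (auto intro!: divide_nonneg_nonneg)
  ultimately have int1: "(\<integral>\<^sup>+u. ennreal (w1 u) * indicator S1 u \<partial>lborel) = ennreal (A * 2)"
    using nn_integral_has_integral_lebesgue' by blast
  have "(w2 has_integral 4 * (exp (- (1/2) * (rho+1)) / (1/2))) S2" unfolding w2_def S2_def
    using has_integral_mult_right[OF has_integral_exp_minus_to_infinity[of "1/2" "rho+1"], of 4] by simp
  then have int2: "(\<integral>\<^sup>+u. ennreal (w2 u) * indicator S2 u \<partial>lborel)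
      = ennreal (4 * (exp (- (1/2) * (rho+1)) / (1/2)))"
    using nn_integral_has_integral_lebesgue'[of S2 w2] unfolding w2_def by simp
  have "(\<integral>\<^sup>+u. ennreal (indicator {rho<..} u / sqrt (cosh u - cosh rho)) \<partial>lborel)
      \<le> (\<integral>\<^sup>+u. ennreal (w1 u) * indicator S1 u + ennreal (w2 u) * indicator S2 u \<partial>lborel)"
    unfolding w1_def w2_def A_def S1_def S2_def
    by (intro nn_integral_mono ennreal_inverse_sqrt_cosh_sub_cosh_le r)
  also have "\<dots> = (\<integral>\<^sup>+u. ennreal (w1 u) * indicator S1 u \<partial>lborel) + (\<integral>\<^sup>+u. ennreal (w2 u) * indicator S2 u \<partial>lborel)"
    by (rule nn_integral_add) (unfold w1_def w2_def S1_def S2_def, measurable)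
  also have "\<dots> = ennreal (A * 2) + ennreal (4 * (exp (- (1/2) * (rho+1)) / (1/2)))"
    unfolding int1 int2 ..
  also have "\<dots> \<le> ennreal (100 / r\<^sup>2 * exp (- rho/2))"
  proof -
    have "exp (- (1/2) * (rho+1)) \<le> exp (- rho/2)" by simp
    then have "A * 2 + 4 * (exp (- (1/2) * (rho+1)) / (1/2)) \<le> (2 * sqrt (7/r) + 8) * exp (- rho/2)"
      unfolding A_def by (simp add: algebra_simps)
    also have "\<dots> \<le> 100 / r\<^sup>2 * exp (- rho/2)"
      using sqrt_7_div_plus_le_100_div_square[OF r(1,2)] by (intro mult_right_mono) auto
    finally show ?thesis using r unfolding A_def by (simp flip: ennreal_plus)
  qed
  finally show ?thesis .
qed

lemma norm_abel_integral_le: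
  fixes f :: "real \<Rightarrow> complex" and r rho M :: real
  assumes r: "0 < r" "r < 3" "r \<le> rho" and M: "0 \<le> M" and f: "\<And>u. rho < u \<Longrightarrow> norm (f u) \<le> M"
  shows "norm (LINT u:{rho<..}|lborel. f u / complex_of_real (sqrt (cosh u - cosh rho)))
    \<le> M * (100 / r\<^sup>2 * exp (- rho/2))"
proof -
  define F where "F u = indicator {rho<..} u *\<^sub>R (f u / complex_of_real (sqrt (cosh u - cosh rho)))" for u
  have pointwise: "ennreal (norm (F u))
      \<le> ennreal M * ennreal (indicator {rho<..} u / sqrt (cosh u - cosh rho))" for u
  proof (cases "rho < u")
    case True
    then have pos: "0 < cosh u - cosh rho" using r by (simp add: cosh_real_nonneg_less_iff)
    have "norm (F u) \<le> M * (1 / sqrt (cosh u - cosh rho))"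
      using True f[OF True] pos by (simp add: F_def norm_divide divide_right_mono)
    then show ?thesis using True pos M by (simp flip: ennreal_mult add: ennreal_leI)
  qed (simp add: F_def)
  have [measurable]: "cosh \<in> borel_measurable (borel :: real measure)"
    by (intro borel_measurable_continuous_onI continuous_intros)
  have "(\<integral>\<^sup>+u. norm (F u) \<partial>lborel)
      \<le> (\<integral>\<^sup>+u. ennreal M * ennreal (indicator {rho<..} u / sqrt (cosh u - cosh rho)) \<partial>lborel)"
    by (intro nn_integral_mono pointwise)
  also have "\<dots> = ennreal M * (\<integral>\<^sup>+u. ennreal (indicator {rho<..} u / sqrt (cosh u - cosh rho)) \<partial>lborel)"
    by (rule nn_integral_cmult) measurable
  also have "\<dots> \<le> ennreal M * ennreal (100 / r\<^sup>2 * exp (- rho/2))"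
    by (intro mult_left_mono nn_integral_inverse_sqrt_cosh_sub_cosh_le r) simp
  also have "\<dots> = ennreal (M * (100 / r\<^sup>2 * exp (- rho/2)))"
    by (rule ennreal_mult'[symmetric, OF M])
  finally have nn: "(\<integral>\<^sup>+u. norm (F u) \<partial>lborel) \<le> ennreal (M * (100 / r\<^sup>2 * exp (- rho/2)))" .
  have "norm (integral\<^sup>L lborel F) \<le> M * (100 / r\<^sup>2 * exp (- rho/2))"
  proof (cases "integrable lborel F")
    case True
    then have "ennreal (norm (integral\<^sup>L lborel F)) \<le> ennreal (M * (100 / r\<^sup>2 * exp (- rho/2)))"
      using order_trans[OF integral_norm_bound_ennreal nn] by simp
    then show ?thesis using M by (simp add: ennreal_le_iff)
  qed (use M in \<open>simp add: not_integrable_integral_eq\<close>)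
  then show ?thesis by (simp add: set_lebesgue_integral_def F_def[abs_def])
qed

section \<open>The entire extension of h_t\<close>

definition gauss_weight :: "real \<Rightarrow> real" where
  "gauss_weight x = exp (- (x\<^sup>2/2)) * (1 + x\<^sup>2)"

definition gauss_moment :: real where
  "gauss_moment = (LINT x|lborel. gauss_weight x)"

lemma gauss_weight_nonneg: "0 \<le> gauss_weight x"
  unfolding gauss_weight_def by simp

lemma integrable_gauss_weight: "integrable lborel gauss_weight"
proof -
  have "integrable lborel (\<lambda>x. sqrt (2*pi) * (std_normal_density x * \<bar>x\<bar>^0 + std_normal_density x * \<bar>x\<bar>^2))"
    by (intro integrable_mult_right Bochner_Integration.integrable_add integrable_std_normal_moment_abs)
  moreover have "(\<lambda>x. sqrt (2*pi) * (std_normal_density x * \<bar>x\<bar>^0 + std_normal_density x * \<bar>x\<bar>^2)) = gauss_weight"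
    by (auto simp: fun_eq_iff gauss_weight_def std_normal_density_def normal_density_def field_simps)
  ultimately show ?thesis by metis
qed

lemma gauss_moment_nonneg: "0 \<le> gauss_moment"
  unfolding gauss_moment_def by (intro integral_nonneg_AE) (simp add: gauss_weight_nonneg)

lemma integrable_if_norm_le_gauss_weight:
  fixes f :: "real \<Rightarrow> 'b::{banach, second_countable_topology}"
  assumes "f \<in> borel_measurable borel" "\<And>x. norm (f x) \<le> C * gauss_weight x"
  shows "integrable lborel f"
proof (rule Bochner_Integration.integrable_bound)
  show "integrable lborel (\<lambda>x. C * gauss_weight x)"
    using integrable_gauss_weight by (rule integrable_mult_right)
  show "AE x in lborel. norm (f x) \<le> norm (C * gauss_weight x)"
    using assms(2) by (auto intro: order_trans[OF _ abs_ge_self])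
qed (use assms in simp)

definition h_ext_integrand :: "real \<Rightarrow> complex \<Rightarrow> real \<Rightarrow> complex" where
  "h_ext_integrand t z mu = exp (- (of_real (t\<^sup>2) * (1/4 + z\<^sup>2 - of_real mu)\<^sup>2))"

definition h_ext :: "real \<Rightarrow> real \<Rightarrow> real \<Rightarrow> complex \<Rightarrow> complex" where
  "h_ext a b t z = of_real (t / sqrt pi) * integral {a..b} (h_ext_integrand t z)"

lemma holomorphic_h_ext: "h_ext a b t holomorphic_on S"
proof -
  define D where "D z mu = h_ext_integrand t z mu * (- (of_real (t\<^sup>2) * (2 * (1/4 + z\<^sup>2 - of_real mu) * (2 * z))))"
    for z mu
  have "(\<lambda>z. integral (cbox a b) (h_ext_integrand t z)) holomorphic_on UNIV"
  proof (rule leibniz_rule_holomorphic[where fx = D])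
    fix z :: complex and mu :: real
    show "((\<lambda>z. h_ext_integrand t z mu) has_field_derivative D z mu) (at z within UNIV)"
      unfolding h_ext_integrand_def D_def
      by (auto intro!: derivative_eq_intros simp: power2_eq_square algebra_simps)
    show "h_ext_integrand t z integrable_on cbox a b"
      unfolding h_ext_integrand_def by (intro integrable_continuous continuous_intros)
  next
    show "continuous_on (UNIV \<times> cbox a b) (\<lambda>(z, mu). D z mu)"
      unfolding h_ext_integrand_def D_def case_prod_unfold by (intro continuous_intros)
  qed auto
  then show ?thesis unfolding h_ext_def
    by (intro holomorphic_intros) (auto intro: holomorphic_on_subset)
qed

lemma h_ext_of_real: "h_ext a b t (of_real r) = of_real (h_t a b t r)"
proof -
  define e where "e = (\<lambda>mu. exp (- (t\<^sup>2 * ((1/4 + r\<^sup>2) - mu)\<^sup>2)))"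
  have "h_ext_integrand t (of_real r) = (\<lambda>mu. of_real (e mu))"
    by (simp add: h_ext_integrand_def e_def fun_eq_iff flip: exp_of_real)
  moreover have "e integrable_on {a..b}"
    unfolding e_def by (intro integrable_continuous_interval continuous_intros)
  then have "integral {a..b} (\<lambda>mu. complex_of_real (e mu)) = of_real (integral {a..b} e)"
    by (intro integral_unique has_integral_of_real integrable_integral)
  ultimately show ?thesis by (simp add: h_ext_def h_t_def f_t_def e_def)
qed

lemma continuous_on_h_t: "continuous_on S (h_t a b t)"
proof -
  have "continuous_on S (\<lambda>r. Re (h_ext a b t (of_real r)))"
    by (intro continuous_intros continuous_on_compose2[OF holomorphic_on_imp_continuous_on[OF holomorphic_h_ext]])
      auto
  then show ?thesis by (simp add: h_ext_of_real)
qed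

(* With c = 1/4 - mu and q = r^2 - y^2, the right-hand side is Re ((1/4 + (r + i y)^2 - mu)^2). *)
lemma quartic_exponent_lower_bound:
  fixes c q y b :: real
  assumes "1/4 - b \<le> c" "c \<le> 1/4" "-3/4 \<le> c" "- y\<^sup>2 \<le> q"
  shows "(max (1/4 - b) 0)\<^sup>2 + q\<^sup>2/4 - 20 * y^4 - y\<^sup>2/2 - 9/16 \<le> (c + q)\<^sup>2 - 4 * (q + y\<^sup>2) * y\<^sup>2"
proof -
  have "(max (1/4 - b) 0)\<^sup>2 - y\<^sup>2/2 + q\<^sup>2/2 - 9/16 \<le> (c + q)\<^sup>2"
  proof (cases "c \<ge> 0")
    case True
    have "(max (1/4 - b) 0)\<^sup>2 \<le> c\<^sup>2" using True assms(1) by (intro power_mono) auto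
    moreover have "- y\<^sup>2/2 \<le> 2*c*q"
    proof -
      have "2*c*(-y\<^sup>2) \<le> 2*c*q" using True assms(4) by (intro mult_left_mono) auto
      moreover have "2*c*y\<^sup>2 \<le> 2*(1/4)*y\<^sup>2" using True assms(2) by (intro mult_right_mono) auto
      ultimately show ?thesis by simp
    qed
    moreover have "(c + q)\<^sup>2 = c\<^sup>2 + 2*c*q + q\<^sup>2" by (simp add: power2_eq_square algebra_simps)
    moreover have "0 \<le> q\<^sup>2" by simp
    ultimately show ?thesis by linarith
  next
    case False
    then have "(max (1/4 - b) 0)\<^sup>2 = 0" using assms(1) by simp
    moreover have "c\<^sup>2 \<le> 9/16"
      using False assms(3) power_mono[of "-c" "3/4" 2] by (simp add: power2_eq_square)
    moreover have "(c+q)\<^sup>2 - q\<^sup>2/2 + c\<^sup>2 = (q+2*c)\<^sup>2/2" by (simp add: power2_eq_square algebra_simps)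
    moreover have "0 \<le> (q+2*c)\<^sup>2/2" "0 \<le> y\<^sup>2" by simp_all
    ultimately show ?thesis by linarith
  qed
  moreover have "q\<^sup>2/2 - 4 * (q + y\<^sup>2) * y\<^sup>2 - (q\<^sup>2/4 - 20 * y^4) = (q/2 - 4*y\<^sup>2)\<^sup>2"
    by (simp add: power2_eq_square power4_eq_xxxx algebra_simps)
  moreover have "0 \<le> (q/2 - 4*y\<^sup>2)\<^sup>2" by simp
  ultimately show ?thesis by linarith
qed

lemma norm_h_ext_integrand_le:
  assumes "0 \<le> a" "a \<le> mu" "mu \<le> b" "b \<le> 1"
  shows "norm (h_ext_integrand t (Complex r y) mu) \<le>
    exp (- (t\<^sup>2 * ((max (1/4 - b) 0)\<^sup>2 + (r\<^sup>2 - y\<^sup>2)\<^sup>2/4 - 20 * y^4 - y\<^sup>2/2 - 9/16)))"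
proof -
  define w where "w = 1/4 + (Complex r y)\<^sup>2 - of_real mu"
  have "Re w = 1/4 - mu + r\<^sup>2 - y\<^sup>2" "Im w = 2 * r * y"
    unfolding w_def by (simp_all add: power2_eq_square)
  moreover have "Re (w\<^sup>2) = Re w * Re w - Im w * Im w" by (simp add: power2_eq_square)
  ultimately have "Re (w\<^sup>2) = (1/4 - mu + r\<^sup>2 - y\<^sup>2)\<^sup>2 - 4 * r\<^sup>2 * y\<^sup>2"
    by (simp add: power2_eq_square)
  also have "\<dots> = ((1/4 - mu) + (r\<^sup>2 - y\<^sup>2))\<^sup>2 - 4 * ((r\<^sup>2 - y\<^sup>2) + y\<^sup>2) * y\<^sup>2"
    by (simp add: algebra_simps)
  finally have "(max (1/4 - b) 0)\<^sup>2 + (r\<^sup>2 - y\<^sup>2)\<^sup>2/4 - 20 * y^4 - y\<^sup>2/2 - 9/16 \<le> Re (w\<^sup>2)"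
    using quartic_exponent_lower_bound[of b "1/4 - mu" y "r\<^sup>2 - y\<^sup>2"] assms by simp
  moreover have "norm (h_ext_integrand t (Complex r y) mu) = exp (- (t\<^sup>2 * Re (w\<^sup>2)))"
    unfolding h_ext_integrand_def norm_exp_eq_Re w_def by (simp del: Complex_eq)
  ultimately show ?thesis by (simp add: mult_left_mono)
qed

lemma norm_h_ext_le:
  assumes "0 \<le> a" "a \<le> b" "b \<le> 1" "0 \<le> t"
  shows "norm (h_ext a b t (Complex r y)) \<le>
    t * exp (- (t\<^sup>2 * ((max (1/4 - b) 0)\<^sup>2 + (r\<^sup>2 - y\<^sup>2)\<^sup>2/4 - 20 * y^4 - y\<^sup>2/2 - 9/16)))"
proof -
  let ?B = "exp (- (t\<^sup>2 * ((max (1/4 - b) 0)\<^sup>2 + (r\<^sup>2 - y\<^sup>2)\<^sup>2/4 - 20 * y^4 - y\<^sup>2/2 - 9/16)))"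
  have "norm (integral {a..b} (h_ext_integrand t (Complex r y))) \<le> ?B * (b - a)"
  proof (rule integral_bound)
    show "continuous_on {a..b} (h_ext_integrand t (Complex r y))"
      unfolding h_ext_integrand_def by (intro continuous_intros)
    fix mu assume "mu \<in> {a..b}"
    then show "norm (h_ext_integrand t (Complex r y) mu) \<le> ?B"
      using assms by (intro norm_h_ext_integrand_le) auto
  qed (use assms in auto)
  also have "\<dots> \<le> ?B * sqrt pi"
  proof -
    have "b - a \<le> 1" using assms by simp
    also have "1 \<le> sqrt pi" using pi_gt3 by simp
    finally show ?thesis by (intro mult_left_mono) auto
  qed
  finally have "t / sqrt pi * norm (integral {a..b} (h_ext_integrand t (Complex r y))) \<le> t / sqrt pi * (?B * sqrt pi)"
    using assms by (intro mult_left_mono) auto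
  moreover have "t / sqrt pi * (?B * sqrt pi) = t * ?B" by simp
  moreover have "norm (h_ext a b t (Complex r y)) = t / sqrt pi * norm (integral {a..b} (h_ext_integrand t (Complex r y)))"
    unfolding h_ext_def norm_mult using assms by (simp add: norm_divide)
  ultimately show ?thesis by linarith
qed

definition h_t_bound :: "real \<Rightarrow> real \<Rightarrow> real" where
  "h_t_bound b t = t * exp (t\<^sup>2 * (9/16 - (max (1/4 - b) 0)\<^sup>2)) * exp 10000"

lemma abs_h_t_le:
  assumes "0 \<le> a" "a \<le> b" "b \<le> 1" "t \<ge> 1/200"
  shows "\<bar>h_t a b t r\<bar> \<le> h_t_bound b t * exp (- (r\<^sup>2/2))"
proof -
  let ?d = "max (1/4 - b) 0"
  have "h_ext a b t (Complex r 0) = of_real (h_t a b t r)"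
    using h_ext_of_real[of a b t r] by (simp add: complex_of_real_def)
  then have "\<bar>h_t a b t r\<bar> \<le> t * exp (- (t\<^sup>2 * (?d\<^sup>2 + (r\<^sup>2)\<^sup>2/4 - 9/16)))"
    using norm_h_ext_le[of a b t r 0] assms by simp
  also have "exp (- (t\<^sup>2 * (?d\<^sup>2 + (r\<^sup>2)\<^sup>2/4 - 9/16))) = exp (t\<^sup>2 * (9/16 - ?d\<^sup>2)) * exp (- (1/4 * t\<^sup>2 * r^4))"
    by (simp add: algebra_simps power2_eq_square power4_eq_xxxx flip: exp_add)
  also have "t * (exp (t\<^sup>2 * (9/16 - ?d\<^sup>2)) * exp (- (1/4 * t\<^sup>2 * r^4)))
      \<le> t * (exp (t\<^sup>2 * (9/16 - ?d\<^sup>2)) * (exp 10000 * exp (- (r\<^sup>2/2))))"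
    using exp_neg_quartic_le_gaussian[of t "1/4" r] assms by (intro mult_left_mono) auto
  also have "\<dots> = h_t_bound b t * exp (- (r\<^sup>2/2))"
    by (simp add: h_t_bound_def ac_simps)
  finally show ?thesis .
qed

lemma abs_h_t_mult_le_gauss_weight:
  assumes "0 \<le> a" "a \<le> b" "b \<le> 1" "t \<ge> 1/200" "\<bar>p\<bar> \<le> 1 + r\<^sup>2"
  shows "\<bar>h_t a b t r\<bar> * \<bar>p\<bar> \<le> h_t_bound b t * gauss_weight r"
proof -
  have "0 \<le> h_t_bound b t" using assms unfolding h_t_bound_def by simp
  then have "\<bar>h_t a b t r\<bar> * \<bar>p\<bar> \<le> (h_t_bound b t * exp (- (r\<^sup>2/2))) * (1 + r\<^sup>2)"
    using abs_h_t_le[OF assms(1-4), of r] assms(5) by (intro mult_mono) auto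
  then show ?thesis unfolding gauss_weight_def by (simp add: mult.assoc)
qed

section \<open>Differentiability of g_t\<close>

lemma norm_fourier_transform_sub_linear_le:
  fixes f :: "real \<Rightarrow> real"
  assumes int_f: "\<And>s. integrable lborel (\<lambda>r. complex_of_real (f r) * exp (\<i> * complex_of_real (r * s)))"
    and int_rf: "integrable lborel (\<lambda>r. complex_of_real (f r) * (\<i> * complex_of_real r) * exp (\<i> * complex_of_real (r*u)))"
    and int_r2f: "integrable lborel (\<lambda>r. \<bar>f r\<bar> * r\<^sup>2)"
  shows "norm ((LINT r|lborel. complex_of_real (f r) * exp (\<i> * complex_of_real (r*(u+k))))
      - (LINT r|lborel. complex_of_real (f r) * exp (\<i> * complex_of_real (r*u)))
      - of_real k * (LINT r|lborel. complex_of_real (f r) * (\<i> * complex_of_real r) * exp (\<i> * complex_of_real (r*u))))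
    \<le> k\<^sup>2 / 2 * (LINT r|lborel. \<bar>f r\<bar> * r\<^sup>2)"
proof -
  define e where "e v r = exp (\<i> * complex_of_real (r * v))" for v r
  define X where "X = (\<lambda>r. of_real (f r) * e (u+k) r - of_real (f r) * e u r
      - of_real k * (of_real (f r) * (\<i> * complex_of_real r) * e u r))"
  have i1: "integrable lborel (\<lambda>r. of_real (f r) * e (u+k) r)"
    and i2: "integrable lborel (\<lambda>r. of_real (f r) * e u r)"
    unfolding e_def by (rule int_f)+
  have i3: "integrable lborel (\<lambda>r. of_real k * (of_real (f r) * (\<i> * complex_of_real r) * e u r))"
    unfolding e_def by (intro integrable_mult_right int_rf)
  have X_int: "(LINT r|lborel. X r) = (LINT r|lborel. of_real (f r) * e (u+k) r) - (LINT r|lborel. of_real (f r) * e u r)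
      - of_real k * (LINT r|lborel. of_real (f r) * (\<i> * complex_of_real r) * e u r)"
    unfolding X_def
    by (simp only: Bochner_Integration.integral_diff[OF Bochner_Integration.integrable_diff[OF i1 i2] i3]
        Bochner_Integration.integral_diff[OF i1 i2] integral_mult_right_zero)
  have "norm (X r) \<le> k\<^sup>2 / 2 * (\<bar>f r\<bar> * r\<^sup>2)" for r
  proof -
    have "e (u+k) r = e u r * exp (\<i> * complex_of_real (r*k))"
      unfolding e_def by (simp add: distrib_left algebra_simps flip: exp_add)
    then have "X r = of_real (f r) * e u r * (exp (\<i> * complex_of_real (r*k)) - 1 - \<i> * complex_of_real (r*k))"
      unfolding X_def by (simp add: algebra_simps)
    then have "norm (X r) = \<bar>f r\<bar> * cmod (exp (\<i> * complex_of_real (r*k)) - 1 - \<i> * complex_of_real (r*k))"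
      by (simp add: e_def norm_mult)
    also have "\<dots> \<le> \<bar>f r\<bar> * ((r*k)\<^sup>2/2)"
      by (intro mult_left_mono norm_iexp_sub_linear_le) auto
    finally show ?thesis by (simp add: power_mult_distrib algebra_simps)
  qed
  moreover have "integrable lborel X"
    unfolding X_def by (intro Bochner_Integration.integrable_diff i1 i2 i3)
  ultimately have "norm (LINT r|lborel. X r) \<le> (LINT r|lborel. k\<^sup>2 / 2 * (\<bar>f r\<bar> * r\<^sup>2))"
    by (intro Bochner_Integration.integral_norm_bound_integral integrable_mult_right int_r2f)
  also have "\<dots> = k\<^sup>2 / 2 * (LINT r|lborel. \<bar>f r\<bar> * r\<^sup>2)" by simp
  finally show ?thesis unfolding X_int e_def .
qed

lemma has_vector_derivative_fourier_transform:
  fixes f :: "real \<Rightarrow> real"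
  assumes int_f: "\<And>s. integrable lborel (\<lambda>r. complex_of_real (f r) * exp (\<i> * complex_of_real (r * s)))"
    and int_rf: "integrable lborel (\<lambda>r. complex_of_real (f r) * (\<i> * complex_of_real r) * exp (\<i> * complex_of_real (r*u)))"
    and int_r2f: "integrable lborel (\<lambda>r. \<bar>f r\<bar> * r\<^sup>2)"
  shows "((\<lambda>v. LINT r|lborel. complex_of_real (f r) * exp (\<i> * complex_of_real (r * v))) has_vector_derivative
    (LINT r|lborel. complex_of_real (f r) * (\<i> * complex_of_real r) * exp (\<i> * complex_of_real (r*u)))) (at u)"
proof -
  define G where "G = (\<lambda>v. LINT r|lborel. complex_of_real (f r) * exp (\<i> * complex_of_real (r * v)))"
  define D where "D = (LINT r|lborel. complex_of_real (f r) * (\<i> * complex_of_real r) * exp (\<i> * complex_of_real (r*u)))"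
  define M where "M = (LINT r|lborel. \<bar>f r\<bar> * r\<^sup>2) / 2"
  have M0: "M \<ge> 0" unfolding M_def by (auto intro!: integral_nonneg_AE)
  have "(G has_derivative (\<lambda>x. x *\<^sub>R D)) (at u)"
    unfolding has_derivative_at_alt
  proof (intro conjI allI impI)
    show "bounded_linear (\<lambda>x. x *\<^sub>R D)" by (rule bounded_linear_scaleR_left)
    fix e :: real assume "e > 0"
    show "\<exists>d>0. \<forall>y. norm (y - u) < d \<longrightarrow> norm (G y - G u - (y - u) *\<^sub>R D) \<le> e * norm (y - u)"
    proof (intro exI[of _ "e/(M+1)"] conjI allI impI)
      show "e/(M+1) > 0" using \<open>e > 0\<close> M0 by simp
      fix y assume y: "norm (y - u) < e/(M+1)"
      have "M * \<bar>y-u\<bar> \<le> (M+1) * \<bar>y-u\<bar>" by (intro mult_right_mono) auto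
      also have "\<dots> \<le> e" using y M0 by (simp add: field_simps)
      finally have "M * \<bar>y-u\<bar> * \<bar>y-u\<bar> \<le> e * \<bar>y-u\<bar>" by (intro mult_right_mono) auto
      have "norm (G y - G u - (y - u) *\<^sub>R D) \<le> (y - u)\<^sup>2 / 2 * (LINT r|lborel. \<bar>f r\<bar> * r\<^sup>2)"
        using norm_fourier_transform_sub_linear_le[OF int_f int_rf int_r2f, of "y - u"]
        unfolding G_def D_def scaleR_conv_of_real by simp
      also have "\<dots> = M * \<bar>y-u\<bar> * \<bar>y-u\<bar>" unfolding M_def by (simp add: power2_eq_square)
      finally show "norm (G y - G u - (y - u) *\<^sub>R D) \<le> e * norm (y - u)"
        using \<open>M * \<bar>y-u\<bar> * \<bar>y-u\<bar> \<le> e * \<bar>y-u\<bar>\<close> by simp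
    qed
  qed
  then show ?thesis unfolding has_vector_derivative_def G_def D_def .
qed

definition g_t_deriv :: "real \<Rightarrow> real \<Rightarrow> real \<Rightarrow> real \<Rightarrow> complex" where
  "g_t_deriv a b t u = complex_of_real (1/(2*pi)) *
     (LINT r|lborel. complex_of_real (h_t a b t r) * (\<i> * complex_of_real r) * exp (\<i> * complex_of_real (r*u)))"

context
  fixes a b t :: real
  assumes ab: "0 \<le> a" "a \<le> b" "b \<le> 1" and t: "t \<ge> 1/200"
begin

lemma integrable_h_t_fourier:
  "integrable lborel (\<lambda>r. complex_of_real (h_t a b t r) * exp (\<i> * complex_of_real (r*u)))"
proof (rule integrable_if_norm_le_gauss_weight)
  show "(\<lambda>r. complex_of_real (h_t a b t r) * exp (\<i> * complex_of_real (r*u))) \<in> borel_measurable borel"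
    by (intro borel_measurable_continuous_onI continuous_intros continuous_on_h_t)
  show "norm (complex_of_real (h_t a b t r) * exp (\<i> * complex_of_real (r*u))) \<le> h_t_bound b t * gauss_weight r" for r
    using abs_h_t_mult_le_gauss_weight[OF ab t, of 1 r] by (simp add: norm_mult)
qed

lemma integrable_h_t_fourier_deriv:
  "integrable lborel (\<lambda>r. complex_of_real (h_t a b t r) * (\<i> * complex_of_real r) * exp (\<i> * complex_of_real (r*u)))"
proof (rule integrable_if_norm_le_gauss_weight)
  show "(\<lambda>r. complex_of_real (h_t a b t r) * (\<i> * complex_of_real r) * exp (\<i> * complex_of_real (r*u))) \<in> borel_measurable borel"
    by (intro borel_measurable_continuous_onI continuous_intros continuous_on_h_t)
  show "norm (complex_of_real (h_t a b t r) * (\<i> * complex_of_real r) * exp (\<i> * complex_of_real (r*u)))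
      \<le> h_t_bound b t * gauss_weight r" for r
    using abs_h_t_mult_le_gauss_weight[OF ab t abs_le_one_plus_square, of r] by (simp add: norm_mult)
qed

lemma integrable_abs_h_t_mult_square: "integrable lborel (\<lambda>r. \<bar>h_t a b t r\<bar> * r\<^sup>2)"
proof (rule integrable_if_norm_le_gauss_weight)
  show "(\<lambda>r. \<bar>h_t a b t r\<bar> * r\<^sup>2) \<in> borel_measurable borel"
    by (intro borel_measurable_continuous_onI continuous_intros continuous_on_h_t)
  show "norm (\<bar>h_t a b t r\<bar> * r\<^sup>2) \<le> h_t_bound b t * gauss_weight r" for r
    using abs_h_t_mult_le_gauss_weight[OF ab t, of "r\<^sup>2" r] by simp
qed

lemma has_vector_derivative_g_t: "(g_t a b t has_vector_derivative g_t_deriv a b t u) (at u)"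
  unfolding g_t_def[abs_def] g_t_deriv_def
  by (intro has_vector_derivative_mult_right has_vector_derivative_fourier_transform
      integrable_h_t_fourier integrable_h_t_fourier_deriv integrable_abs_h_t_mult_square)

lemma vector_derivative_g_t: "vector_derivative (g_t a b t) (at u) = g_t_deriv a b t u"
  by (rule vector_derivative_at[OF has_vector_derivative_g_t])

end

section \<open>Shifting the contour of integration\<close>

lemma has_integral_horizontal_segment:
  fixes \<Phi> P :: "complex \<Rightarrow> complex"
  assumes P: "\<And>z. (P has_field_derivative \<Phi> z) (at z)" and N: "0 < N"
  shows "((\<lambda>x. \<Phi> (of_real x + \<i> * of_real y)) has_integral
    P (of_real N + \<i> * of_real y) - P (of_real (-N) + \<i> * of_real y)) {-N..N}"
proof -
  have "(\<Phi> has_contour_integral (P z' - P z)) (linepath z z')" for z z'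
    using contour_integral_primitive[of UNIV P \<Phi> "linepath z z'"] P by simp
  then have "(\<Phi> has_contour_integral P (of_real N + \<i> * of_real y) - P (of_real (-N) + \<i> * of_real y))
      ((+) (\<i> * of_real y) \<circ> linepath (of_real (-N)) (of_real N))"
    unfolding linepath_translate by (simp add: add.commute)
  then have "((\<lambda>z. \<Phi> (z + \<i> * of_real y)) has_contour_integral
      P (of_real N + \<i> * of_real y) - P (of_real (-N) + \<i> * of_real y)) (linepath (of_real (-N)) (of_real N))"
    by (simp add: has_contour_integral_translate)
  then show ?thesis
    using has_contour_integral_linepath_Reals_iff[of "of_real (-N)" "of_real N" "\<lambda>z. \<Phi> (z + \<i> * of_real y)"] N
    by simp
qed

lemma norm_primitive_vertical_diff_le:
  fixes \<Phi> P :: "complex \<Rightarrow> complex"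
  assumes P: "\<And>z. (P has_field_derivative \<Phi> z) (at z)" and y: "0 \<le> y"
    and bound: "\<And>s. 0 \<le> s \<Longrightarrow> s \<le> y \<Longrightarrow> norm (\<Phi> (Complex x s)) \<le> B"
  shows "norm (P (of_real x + \<i> * of_real y) - P (of_real x)) \<le> B * y"
proof -
  have "norm (\<Phi> (Complex x 0)) \<le> B" using bound[of 0] y by simp
  then have B: "0 \<le> B" by (rule order_trans[OF norm_ge_zero])
  have "(\<Phi> has_contour_integral P (of_real x + \<i> * of_real y) - P (of_real x))
      (linepath (of_real x) (of_real x + \<i> * of_real y))"
    using contour_integral_primitive[of UNIV P \<Phi> "linepath (of_real x) (of_real x + \<i> * of_real y)"] P
    by simp
  then have "norm (P (of_real x + \<i> * of_real y) - P (of_real x)) \<le> B * norm (of_real x + \<i> * of_real y - of_real x)"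
  proof (rule has_contour_integral_bound_linepath[OF _ B])
    fix z assume "z \<in> closed_segment (complex_of_real x) (complex_of_real x + \<i> * complex_of_real y)"
    then obtain v where v: "0 \<le> v" "v \<le> 1"
      "z = (1 - v) *\<^sub>R complex_of_real x + v *\<^sub>R (complex_of_real x + \<i> * complex_of_real y)"
      unfolding closed_segment_def by blast
    then have "z = Complex x (v * y)" by (simp add: complex_eq_iff scaleR_conv_of_real algebra_simps)
    moreover have "v * y \<le> y" using v y mult_right_mono[of v 1 y] by simp
    ultimately show "norm (\<Phi> z) \<le> B" using bound v y by simp
  qed
  then show ?thesis using y by (simp add: norm_mult)
qed

lemma norm_integral_interval_le_shifted:
  fixes \<Phi> :: "complex \<Rightarrow> complex" and w :: "real \<Rightarrow> real"
  assumes holo: "\<Phi> holomorphic_on UNIV" and N: "0 < N" and y: "0 < y"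
    and w: "w integrable_on {-N..N}"
    and horiz: "\<And>x. x \<in> {-N..N} \<Longrightarrow> norm (\<Phi> (Complex x y)) \<le> w x"
    and vert: "\<And>x s. \<bar>x\<bar> = N \<Longrightarrow> 0 \<le> s \<Longrightarrow> s \<le> y \<Longrightarrow> norm (\<Phi> (Complex x s)) \<le> B"
  shows "norm (integral {-N..N} (\<lambda>x. \<Phi> (of_real x))) \<le> integral {-N..N} w + 2 * y * B"
proof -
  obtain P where "\<And>z. z \<in> UNIV \<Longrightarrow> (P has_field_derivative \<Phi> z) (at z within UNIV)"
    using holomorphic_convex_primitive'[OF convex_UNIV open_UNIV holo] by blast
  then have P: "\<And>z. (P has_field_derivative \<Phi> z) (at z)" by simp
  define J where "J = P (of_real N + \<i> * of_real y) - P (of_real (-N) + \<i> * of_real y)"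
  have top: "((\<lambda>x. \<Phi> (of_real x + \<i> * of_real y)) has_integral J) {-N..N}"
    unfolding J_def by (rule has_integral_horizontal_segment[OF P N])
  have "norm (integral {-N..N} (\<lambda>x. \<Phi> (of_real x + \<i> * of_real y))) \<le> integral {-N..N} w"
  proof (rule integral_norm_bound_integral)
    show "(\<lambda>x. \<Phi> (of_real x + \<i> * of_real y)) integrable_on {-N..N}" using top by blast
    fix x assume "x \<in> {-N..N}"
    moreover have "of_real x + \<i> * of_real y = Complex x y" by (simp add: complex_eq_iff)
    ultimately show "norm (\<Phi> (of_real x + \<i> * of_real y)) \<le> w x" using horiz by simp
  qed (rule w)
  then have top_le: "norm J \<le> integral {-N..N} w" using top by (simp add: integral_unique)
  have side_le: "norm (P (of_real x + \<i> * of_real y) - P (of_real x)) \<le> B * y" if "\<bar>x\<bar> = N" for x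
    using norm_primitive_vertical_diff_le[OF P less_imp_le[OF y]] vert[OF that] by blast
  have "integral {-N..N} (\<lambda>x. \<Phi> (of_real x)) = J - (P (of_real N + \<i> * of_real y) - P (of_real N))
      + (P (of_real (-N) + \<i> * of_real y) - P (of_real (-N)))"
    using has_integral_horizontal_segment[OF P N, of 0] unfolding J_def by (simp add: integral_unique)
  then have "norm (integral {-N..N} (\<lambda>x. \<Phi> (of_real x))) \<le> norm J
      + norm (P (of_real N + \<i> * of_real y) - P (of_real N)) + norm (P (of_real (-N) + \<i> * of_real y) - P (of_real (-N)))"
    by (metis norm_triangle_ineq norm_triangle_ineq4 add_right_mono order_trans)
  also have "\<dots> \<le> integral {-N..N} w + B * y + B * y"
    using top_le side_le[of N] side_le[of "-N"] N by (intro add_mono) auto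
  also have "\<dots> = integral {-N..N} w + 2 * y * B" by simp
  finally show ?thesis .
qed

lemma integral_symmetric_interval_tendsto:
  fixes f :: "real \<Rightarrow> 'a::euclidean_space"
  assumes f: "integrable lborel f"
  shows "(\<lambda>n. integral {- real n..real n} f) \<longlonglongrightarrow> integral\<^sup>L lborel f"
proof -
  have "(\<lambda>n. integral\<^sup>L lborel (\<lambda>x. indicator {- real n..real n} x *\<^sub>R f x)) \<longlonglongrightarrow> integral\<^sup>L lborel f"
  proof (rule integral_dominated_convergence[where w = "\<lambda>x. norm (f x)"])
    show "AE x in lborel. (\<lambda>n. indicator {- real n..real n} x *\<^sub>R f x) \<longlonglongrightarrow> f x"
    proof (intro AE_I2 tendsto_eventually)
      fix x :: real
      obtain N :: nat where "\<bar>x\<bar> \<le> real N" using real_arch_simple by blast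
      then show "\<forall>\<^sub>F n in sequentially. indicator {- real n..real n} x *\<^sub>R f x = f x"
        unfolding eventually_sequentially by (intro exI[of _ N]) (auto simp: indicator_def)
    qed
  qed (use f in \<open>auto simp: indicator_def\<close>)
  moreover have "integral\<^sup>L lborel (\<lambda>x. indicator {- real n..real n} x *\<^sub>R f x) = integral {- real n..real n} f" for n
  proof -
    have "set_integrable lborel {- real n..real n} f"
      unfolding set_integrable_def using f by (intro integrable_mult_indicator) auto
    from set_borel_integral_eq_integral(2)[OF this] show ?thesis by (simp add: set_lebesgue_integral_def)
  qed
  ultimately show ?thesis by simp
qed

lemma norm_integral_real_line_le_shifted:
  fixes \<Phi> :: "complex \<Rightarrow> complex" and w B :: "real \<Rightarrow> real"
  assumes holo: "\<Phi> holomorphic_on UNIV" and y: "0 < y"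
    and int: "integrable lborel (\<lambda>x. \<Phi> (of_real x))" and w: "integrable lborel w"
    and horiz: "\<And>x. norm (\<Phi> (Complex x y)) \<le> w x"
    and vert: "\<And>x s. 0 \<le> s \<Longrightarrow> s \<le> y \<Longrightarrow> norm (\<Phi> (Complex x s)) \<le> B \<bar>x\<bar>"
    and B: "(\<lambda>n. B (real n)) \<longlonglongrightarrow> 0"
  shows "norm (LINT x|lborel. \<Phi> (of_real x)) \<le> (LINT x|lborel. w x)"
proof -
  have w_nonneg: "0 \<le> w x" for x using order_trans[OF norm_ge_zero horiz[of x]] .
  have w_UNIV: "w integrable_on UNIV" using integrable_on_lborel[OF w] .
  have bound: "norm (integral {- real n..real n} (\<lambda>x. \<Phi> (of_real x))) \<le> (LINT x|lborel. w x) + 2 * y * B (real n)"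
    if "1 \<le> n" for n :: nat
  proof -
    have "norm (integral {- real n..real n} (\<lambda>x. \<Phi> (of_real x))) \<le> integral {- real n..real n} w + 2 * y * B (real n)"
      proof (rule norm_integral_interval_le_shifted[OF holo _ y integrable_on_subinterval[OF w_UNIV]])
      show "norm (\<Phi> (Complex x s)) \<le> B (real n)" if "\<bar>x\<bar> = real n" "0 \<le> s" "s \<le> y" for x s
        using vert[OF that(2,3), of x] that(1) by simp
    qed (use that horiz in auto)
    moreover have "integral {- real n..real n} w \<le> integral UNIV w"
      using w_nonneg by (intro integral_subset_le integrable_on_subinterval[OF w_UNIV] w_UNIV) auto
    ultimately show ?thesis using integral_lborel[OF w] by linarith
  qed
  have "(\<lambda>n. norm (integral {- real n..real n} (\<lambda>x. \<Phi> (of_real x)))) \<longlonglongrightarrow> norm (LINT x|lborel. \<Phi> (of_real x))"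
    using tendsto_norm[OF integral_symmetric_interval_tendsto[OF int]] .
  moreover have "(\<lambda>n. (LINT x|lborel. w x) + 2 * y * B (real n)) \<longlonglongrightarrow> (LINT x|lborel. w x) + 2 * y * 0"
    by (intro tendsto_intros B)
  ultimately have "norm (LINT x|lborel. \<Phi> (of_real x)) \<le> (LINT x|lborel. w x) + 2 * y * 0"
    by (rule LIMSEQ_le) (use bound in blast)
  then show ?thesis by simp
qed

section \<open>Bounds for the derivative of g_t and for K_t\<close>

definition fourier_integrand :: "real \<Rightarrow> real \<Rightarrow> real \<Rightarrow> real \<Rightarrow> complex \<Rightarrow> complex" where
  "fourier_integrand a b t u z = z * h_ext a b t z * exp (\<i> * z * complex_of_real u)"

lemma holomorphic_fourier_integrand: "fourier_integrand a b t u holomorphic_on S"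
  unfolding fourier_integrand_def[abs_def] by (intro holomorphic_intros holomorphic_h_ext)

lemma fourier_integrand_of_real:
  "fourier_integrand a b t u (of_real r) = - \<i> * (complex_of_real (h_t a b t r) * (\<i> * complex_of_real r) * exp (\<i> * complex_of_real (r*u)))"
  by (simp add: fourier_integrand_def h_ext_of_real algebra_simps)

definition deriv_const :: real where
  "deriv_const = gauss_moment * (1280001 * exp 20000) / (2 * pi)"

definition K_t_const :: real where
  "K_t_const = 100 / (sqrt 2 * pi) * deriv_const"

lemma deriv_const_nonneg: "0 \<le> deriv_const"
  using gauss_moment_nonneg unfolding deriv_const_def by simp

lemma K_t_const_nonneg: "0 \<le> K_t_const"
  using deriv_const_nonneg unfolding K_t_const_def by simp

context
  fixes a b t :: real
  assumes ab: "0 \<le> a" "a \<le> b" "b \<le> 1" and t: "t \<ge> 1/200"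
begin

lemma norm_fourier_integrand_le:
  assumes "0 \<le> u" "0 \<le> s" "s \<le> y"
  shows "norm (fourier_integrand a b t u (Complex r s)) \<le> (\<bar>r\<bar> + y) * (t * exp (- (t\<^sup>2 * (max (1/4 - b) 0)\<^sup>2))
    * exp (t\<^sup>2 * (81/4 * y^4 + y\<^sup>2/2 + 9/16)) * exp (- (1/8 * t\<^sup>2 * r^4))) * exp (- (s*u))"
proof -
  let ?d = "max (1/4 - b) 0"
  have "s\<^sup>2 \<le> y\<^sup>2" "s^4 \<le> y^4" using assms by (auto intro: power_mono)
  moreover have "(r\<^sup>2 - s\<^sup>2)\<^sup>2/4 - (r^4/8 - s^4/4) = (r\<^sup>2 - 2 * s\<^sup>2)\<^sup>2 / 8"
    by (simp add: power2_eq_square power4_eq_xxxx field_simps)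
  moreover have "0 \<le> (r\<^sup>2 - 2 * s\<^sup>2)\<^sup>2 / 8" by simp
  ultimately have "?d\<^sup>2 - (81/4 * y^4 + y\<^sup>2/2 + 9/16) + r^4/8 \<le> ?d\<^sup>2 + (r\<^sup>2 - s\<^sup>2)\<^sup>2/4 - 20 * s^4 - s\<^sup>2/2 - 9/16"
    by linarith
  then have "t\<^sup>2 * (?d\<^sup>2 - (81/4 * y^4 + y\<^sup>2/2 + 9/16) + r^4/8)
      \<le> t\<^sup>2 * (?d\<^sup>2 + (r\<^sup>2 - s\<^sup>2)\<^sup>2/4 - 20 * s^4 - s\<^sup>2/2 - 9/16)"
    by (rule mult_left_mono) simp
  then have "exp (- (t\<^sup>2 * (?d\<^sup>2 + (r\<^sup>2 - s\<^sup>2)\<^sup>2/4 - 20 * s^4 - s\<^sup>2/2 - 9/16)))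
      \<le> exp (- (t\<^sup>2 * ?d\<^sup>2) + t\<^sup>2 * (81/4 * y^4 + y\<^sup>2/2 + 9/16) + (- (1/8 * t\<^sup>2 * r^4)))"
    by (simp add: algebra_simps)
  also have "\<dots> = exp (- (t\<^sup>2 * ?d\<^sup>2)) * exp (t\<^sup>2 * (81/4 * y^4 + y\<^sup>2/2 + 9/16)) * exp (- (1/8 * t\<^sup>2 * r^4))"
    by (simp only: exp_add)
  finally have "t * exp (- (t\<^sup>2 * (?d\<^sup>2 + (r\<^sup>2 - s\<^sup>2)\<^sup>2/4 - 20 * s^4 - s\<^sup>2/2 - 9/16)))
      \<le> t * (exp (- (t\<^sup>2 * ?d\<^sup>2)) * exp (t\<^sup>2 * (81/4 * y^4 + y\<^sup>2/2 + 9/16)) * exp (- (1/8 * t\<^sup>2 * r^4)))"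
    using t by (intro mult_left_mono) auto
  with norm_h_ext_le[OF ab, of t r s] t have "norm (h_ext a b t (Complex r s)) \<le>
      t * (exp (- (t\<^sup>2 * ?d\<^sup>2)) * exp (t\<^sup>2 * (81/4 * y^4 + y\<^sup>2/2 + 9/16)) * exp (- (1/8 * t\<^sup>2 * r^4)))"
    by linarith
  then have "norm (h_ext a b t (Complex r s)) \<le>
      t * exp (- (t\<^sup>2 * ?d\<^sup>2)) * exp (t\<^sup>2 * (81/4 * y^4 + y\<^sup>2/2 + 9/16)) * exp (- (1/8 * t\<^sup>2 * r^4))"
    by (simp only: mult.assoc)
  moreover have "norm (Complex r s) \<le> \<bar>r\<bar> + y" using cmod_le[of "Complex r s"] assms by simp
  moreover have "norm (exp (\<i> * Complex r s * complex_of_real u)) = exp (- (s*u))" by simp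
  ultimately show ?thesis unfolding fourier_integrand_def norm_mult
    by (intro mult_mono) (use assms t in \<open>auto intro!: mult_nonneg_nonneg\<close>)
qed

lemma norm_fourier_integrand_horizontal_le:
  assumes u: "0 \<le> u" and y: "0 \<le> y"
  shows "norm (fourier_integrand a b t u (Complex x y)) \<le> ((1 + y) * t * exp (- (t\<^sup>2 * (max (1/4 - b) 0)\<^sup>2))
    * exp (t\<^sup>2 * (81/4 * y^4 + y\<^sup>2/2 + 9/16)) * exp 20000 * exp (- (y*u))) * gauss_weight x"
proof -
  define T where "T = t * exp (- (t\<^sup>2 * (max (1/4 - b) 0)\<^sup>2)) * exp (t\<^sup>2 * (81/4 * y^4 + y\<^sup>2/2 + 9/16))"
  have T: "0 \<le> T" unfolding T_def using t by simp
  have "y * 1 \<le> y * (1 + x\<^sup>2)" using y by (intro mult_left_mono) auto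
  then have "\<bar>x\<bar> + y \<le> (1 + x\<^sup>2) + y * (1 + x\<^sup>2)"
    using abs_le_one_plus_square[of x] by linarith
  also have "\<dots> = (1 + y) * (1 + x\<^sup>2)" by (simp add: algebra_simps)
  finally have X: "\<bar>x\<bar> + y \<le> (1 + y) * (1 + x\<^sup>2)" .
  have Q: "exp (- (1/8 * t\<^sup>2 * x^4)) \<le> exp 20000 * exp (- (x\<^sup>2/2))"
    using exp_neg_quartic_le_gaussian[of t "1/8" x] t by simp
  have "norm (fourier_integrand a b t u (Complex x y)) \<le> (\<bar>x\<bar> + y) * (T * exp (- (1/8 * t\<^sup>2 * x^4))) * exp (- (y*u))"
    using norm_fourier_integrand_le[of u y y x] u y unfolding T_def by simp
  also have "\<dots> \<le> ((1 + y) * (1 + x\<^sup>2)) * (T * (exp 20000 * exp (- (x\<^sup>2/2)))) * exp (- (y*u))"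
    using X Q T y by (intro mult_right_mono mult_mono mult_left_mono) auto
  also have "\<dots> = ((1 + y) * T * exp 20000 * exp (- (y*u))) * gauss_weight x"
    unfolding gauss_weight_def by (simp add: ac_simps)
  finally show ?thesis unfolding T_def by (simp only: mult.assoc)
qed

lemma norm_fourier_integrand_vertical_le:
  assumes "0 \<le> u" "0 \<le> s" "s \<le> y"
  shows "norm (fourier_integrand a b t u (Complex x s))
    \<le> (\<bar>x\<bar> + y) * (t * exp (t\<^sup>2 * (81/4 * y^4 + y\<^sup>2/2 + 9/16)) * exp (- (1/8 * t\<^sup>2 * \<bar>x\<bar>^4)))"
proof -
  have "norm (fourier_integrand a b t u (Complex x s)) \<le> (\<bar>x\<bar> + y) * (t * exp (- (t\<^sup>2 * (max (1/4 - b) 0)\<^sup>2))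
      * exp (t\<^sup>2 * (81/4 * y^4 + y\<^sup>2/2 + 9/16)) * exp (- (1/8 * t\<^sup>2 * x^4))) * exp (- (s*u))"
    using norm_fourier_integrand_le assms by blast
  also have "\<dots> \<le> (\<bar>x\<bar> + y) * (t * 1 * exp (t\<^sup>2 * (81/4 * y^4 + y\<^sup>2/2 + 9/16)) * exp (- (1/8 * t\<^sup>2 * x^4))) * 1"
    using assms t by (intro mult_mono mult_left_mono mult_right_mono) (auto simp: zero_le_mult_iff)
  finally show ?thesis by (simp add: power_even_abs)
qed

lemma norm_g_t_deriv_le_shifted:
  assumes u: "0 < u" and y: "0 < y"
  shows "norm (g_t_deriv a b t u) \<le> 1/(2*pi) * ((1 + y) * t * exp (- (t\<^sup>2 * (max (1/4 - b) 0)\<^sup>2))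
    * exp (t\<^sup>2 * (81/4 * y^4 + y\<^sup>2/2 + 9/16)) * exp 20000 * exp (- (y*u))) * gauss_moment"
proof -
  define W where "W = (1 + y) * t * exp (- (t\<^sup>2 * (max (1/4 - b) 0)\<^sup>2))
    * exp (t\<^sup>2 * (81/4 * y^4 + y\<^sup>2/2 + 9/16)) * exp 20000 * exp (- (y*u))"
  define B where "B N = (N + y) * (t * exp (t\<^sup>2 * (81/4 * y^4 + y\<^sup>2/2 + 9/16)) * exp (- (1/8 * t\<^sup>2 * N^4)))"
    for N :: real
  have "norm (LINT x|lborel. fourier_integrand a b t u (of_real x)) \<le> (LINT x|lborel. W * gauss_weight x)"
  proof (rule norm_integral_real_line_le_shifted[OF holomorphic_fourier_integrand y])
    show "integrable lborel (\<lambda>x. fourier_integrand a b t u (of_real x))"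
      unfolding fourier_integrand_of_real
      by (intro integrable_mult_right integrable_h_t_fourier_deriv[OF ab t])
    show "integrable lborel (\<lambda>x. W * gauss_weight x)"
      by (intro integrable_mult_right integrable_gauss_weight)
    show "norm (fourier_integrand a b t u (Complex x y)) \<le> W * gauss_weight x" for x
      unfolding W_def using norm_fourier_integrand_horizontal_le u y by simp
    show "norm (fourier_integrand a b t u (Complex x s)) \<le> B \<bar>x\<bar>" if "0 \<le> s" "s \<le> y" for x s
      unfolding B_def using norm_fourier_integrand_vertical_le that u by simp
    show "(\<lambda>n. B (real n)) \<longlonglongrightarrow> 0"
      using t unfolding B_def by real_asymp
  qed
  also have "(LINT x|lborel. W * gauss_weight x) = W * gauss_moment"
    by (simp add: gauss_moment_def)
  finally have "norm (LINT x|lborel. fourier_integrand a b t u (of_real x)) \<le> W * gauss_moment" .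
  have "g_t_deriv a b t u = complex_of_real (1/(2*pi)) * (\<i> * (LINT x|lborel. fourier_integrand a b t u (of_real x)))"
    unfolding g_t_deriv_def fourier_integrand_of_real by simp
  then have "norm (g_t_deriv a b t u) = 1/(2*pi) * norm (LINT x|lborel. fourier_integrand a b t u (of_real x))"
    by (simp only: norm_mult norm_of_real) simp
  also have "\<dots> \<le> 1/(2*pi) * (W * gauss_moment)"
    using \<open>norm (LINT x|lborel. _) \<le> W * gauss_moment\<close> by (intro mult_left_mono) auto
  finally show ?thesis unfolding W_def by (simp only: mult.assoc)
qed

lemma norm_g_t_deriv_le_crude:
  "norm (g_t_deriv a b t u) \<le> deriv_const * (t * exp (t\<^sup>2 * (9/16 - (max (1/4 - b) 0)\<^sup>2)))"
proof -
  have "norm (LINT r|lborel. complex_of_real (h_t a b t r) * (\<i> * complex_of_real r) * exp (\<i> * complex_of_real (r*u)))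
      \<le> (LINT r|lborel. h_t_bound b t * gauss_weight r)"
  proof (rule Bochner_Integration.integral_norm_bound_integral)
    show "integrable lborel (\<lambda>r. h_t_bound b t * gauss_weight r)"
      by (intro integrable_mult_right integrable_gauss_weight)
    show "norm (complex_of_real (h_t a b t r) * (\<i> * complex_of_real r) * exp (\<i> * complex_of_real (r*u)))
        \<le> h_t_bound b t * gauss_weight r" for r
      using abs_h_t_mult_le_gauss_weight[OF ab t abs_le_one_plus_square, of r] by (simp add: norm_mult)
  qed (rule integrable_h_t_fourier_deriv[OF ab t])
  moreover have "norm (g_t_deriv a b t u) = 1/(2*pi) *
      norm (LINT r|lborel. complex_of_real (h_t a b t r) * (\<i> * complex_of_real r) * exp (\<i> * complex_of_real (r*u)))"
    unfolding g_t_deriv_def norm_mult by (simp only: norm_of_real) simp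
  ultimately have "norm (g_t_deriv a b t u) \<le> 1/(2*pi) * (h_t_bound b t * gauss_moment)"
    unfolding gauss_moment_def by (simp add: divide_right_mono)
  also have "\<dots> = gauss_moment * exp 10000 / (2*pi) * (t * exp (t\<^sup>2 * (9/16 - (max (1/4 - b) 0)\<^sup>2)))"
    by (simp add: h_t_bound_def field_simps)
  also have "\<dots> \<le> deriv_const * (t * exp (t\<^sup>2 * (9/16 - (max (1/4 - b) 0)\<^sup>2)))"
  proof -
    have "exp (10000::real) \<le> 1 * exp 20000" by simp
    also have "\<dots> \<le> 1280001 * exp 20000" by (intro mult_right_mono) auto
    finally show ?thesis
      using t gauss_moment_nonneg unfolding deriv_const_def
      by (intro mult_right_mono divide_right_mono mult_left_mono) auto
  qed
  finally show ?thesis .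
qed

lemma norm_g_t_deriv_le_far:
  assumes Y: "0 < Y" "30 \<le> Y^3" and u: "u = t\<^sup>2 * Y^3"
  shows "norm (g_t_deriv a b t u) \<le> deriv_const * (t * exp (- (t\<^sup>2 * (max (1/4 - b) 0)\<^sup>2)) * exp (- (t\<^sup>2 * Y^4/8)))"
proof -
  define y where "y = Y/4"
  define K where "K = 81/4 * y^4 + y\<^sup>2/2 + 9/16"
  define P where "P = 1/(2*pi) * gauss_moment * exp 20000 * (t * exp (- (t\<^sup>2 * (max (1/4 - b) 0)\<^sup>2)))"
  have P0: "0 \<le> P" unfolding P_def using gauss_moment_nonneg t by simp
  have "0 < u" "0 < y" unfolding y_def u using Y t by simp_all
  then have "norm (g_t_deriv a b t u) \<le> 1/(2*pi) * ((1 + y) * t * exp (- (t\<^sup>2 * (max (1/4 - b) 0)\<^sup>2))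
      * exp (t\<^sup>2 * K) * exp 20000 * exp (- (y*u))) * gauss_moment"
    unfolding K_def by (rule norm_g_t_deriv_le_shifted)
  also have "\<dots> = P * ((1 + y) * (exp (t\<^sup>2 * K) * exp (- (y*u))))"
    unfolding P_def by (simp add: field_simps)
  also have "\<dots> \<le> P * ((1 + y) * (exp (- (t\<^sup>2 * Y^4/8)) * exp (- (t\<^sup>2 * Y^4/32))))"
  proof -
    have "t\<^sup>2 * K - y * u \<le> - (t\<^sup>2 * Y^4/8) - t\<^sup>2 * Y^4/32"
      using mult_left_mono[OF cube_ge_30_imp_shifted_exponent_le[OF Y], of "t\<^sup>2"]
      unfolding u y_def K_def by (simp add: algebra_simps)
    then have "exp (t\<^sup>2 * K) * exp (- (y*u)) \<le> exp (- (t\<^sup>2 * Y^4/8)) * exp (- (t\<^sup>2 * Y^4/32))"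
      by (simp flip: exp_add)
    then show ?thesis using P0 \<open>0 < y\<close> by (intro mult_left_mono) auto
  qed
  also have "\<dots> = P * (((1 + Y/4) * exp (- (t\<^sup>2 * Y^4/32))) * exp (- (t\<^sup>2 * Y^4/8)))"
    unfolding y_def by (simp add: ac_simps)
  also have "\<dots> \<le> P * (1280001 * exp (- (t\<^sup>2 * Y^4/8)))"
  proof -
    have "1 \<le> Y"
    proof (rule ccontr)
      assume "\<not> 1 \<le> Y"
      then have "Y^3 \<le> 1" using Y by (intro power_le_one) auto
      then show False using Y by simp
    qed
    then show ?thesis
      using linear_times_exp_neg_quartic_le[OF _ t] P0 by (intro mult_left_mono mult_right_mono) auto
  qed
  also have "\<dots> = deriv_const * (t * exp (- (t\<^sup>2 * (max (1/4 - b) 0)\<^sup>2)) * exp (- (t\<^sup>2 * Y^4/8)))"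
    unfolding P_def deriv_const_def by (simp add: field_simps)
  finally show ?thesis .
qed

lemma norm_K_t_le:
  assumes r: "0 < r" "r < 3" "r \<le> rho" and M: "0 \<le> M"
    and deriv_le: "\<And>u. rho < u \<Longrightarrow> norm (g_t_deriv a b t u) \<le> M"
  shows "norm (K_t a b t rho) \<le> 1/(sqrt 2 * pi) * (M * (100 / r\<^sup>2 * exp (- rho/2)))"
proof -
  have "norm (K_t a b t rho) = 1/(sqrt 2 * pi) *
      norm (LINT u:{rho<..}|lborel. g_t_deriv a b t u / complex_of_real (sqrt (cosh u - cosh rho)))"
    unfolding K_t_def norm_mult vector_derivative_g_t[OF ab t] by (simp only: norm_of_real) simp
  also have "\<dots> \<le> 1/(sqrt 2 * pi) * (M * (100 / r\<^sup>2 * exp (- rho/2)))"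
    by (intro mult_left_mono norm_abel_integral_le[OF r M deriv_le]) auto
  finally show ?thesis .
qed

lemma norm_K_t_le_crude:
  assumes r: "0 < r" "r < 3" "r \<le> rho"
  shows "norm (K_t a b t rho) \<le> K_t_const * (t / r\<^sup>2 * exp (t\<^sup>2 * (9/16 - (max (1/4 - b) 0)\<^sup>2) - rho/2))"
proof -
  have "0 \<le> deriv_const * (t * exp (t\<^sup>2 * (9/16 - (max (1/4 - b) 0)\<^sup>2)))"
    using t deriv_const_nonneg by simp
  from norm_K_t_le[OF r this norm_g_t_deriv_le_crude]
  have "norm (K_t a b t rho) \<le> 1/(sqrt 2 * pi) * (deriv_const * (t * exp (t\<^sup>2 * (9/16 - (max (1/4 - b) 0)\<^sup>2)))
      * (100 / r\<^sup>2 * exp (- rho/2)))" .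
  also have "\<dots> = K_t_const * (t / r\<^sup>2 * (exp (t\<^sup>2 * (9/16 - (max (1/4 - b) 0)\<^sup>2)) * exp (- rho/2)))"
    unfolding K_t_const_def by (simp add: field_simps)
  also have "exp (t\<^sup>2 * (9/16 - (max (1/4 - b) 0)\<^sup>2)) * exp (- rho/2)
      = exp (t\<^sup>2 * (9/16 - (max (1/4 - b) 0)\<^sup>2) - rho/2)"
    by (simp flip: exp_add)
  finally show ?thesis .
qed

lemma norm_K_t_le_far:
  assumes r: "0 < r" "r < 3" "r \<le> rho" and Y: "0 < Y" "30 \<le> Y^3" and rho: "rho = t\<^sup>2 * Y^3"
  shows "norm (K_t a b t rho) \<le> K_t_const * (t / r\<^sup>2 * exp (- (t\<^sup>2 * (max (1/4 - b) 0)\<^sup>2) - t\<^sup>2 * Y^4/8))"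
proof -
  define M where "M = deriv_const * (t * exp (- (t\<^sup>2 * (max (1/4 - b) 0)\<^sup>2)) * exp (- (t\<^sup>2 * Y^4/8)))"
  have M: "0 \<le> M" using t deriv_const_nonneg unfolding M_def by simp
  have "norm (g_t_deriv a b t u) \<le> M" if u: "rho < u" for u
  proof -
    have "0 < u" "0 < t" using u r t by linarith+
    then obtain Yu where Yu: "0 < Yu" "u = t\<^sup>2 * Yu^3" using cube_root_scaling by metis
    have "Y^3 \<le> Yu^3" using u Yu rho t by simp
    then have "Y \<le> Yu" using power_mono_iff[of Y Yu 3] Y Yu by simp
    then have "Y^4 \<le> Yu^4" using Y by (intro power_mono) auto
    then have "t\<^sup>2 * Y^4 / 8 \<le> t\<^sup>2 * Yu^4 / 8" by (intro divide_right_mono mult_left_mono) auto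
    then have "exp (- (t\<^sup>2 * Yu^4/8)) \<le> exp (- (t\<^sup>2 * Y^4/8))" by simp
    have "30 \<le> Yu^3" using \<open>Y^3 \<le> Yu^3\<close> Y by simp
    then have "norm (g_t_deriv a b t u)
        \<le> deriv_const * (t * exp (- (t\<^sup>2 * (max (1/4 - b) 0)\<^sup>2)) * exp (- (t\<^sup>2 * Yu^4/8)))"
      using norm_g_t_deriv_le_far Yu by blast
    also have "\<dots> \<le> M"
      unfolding M_def using \<open>exp (- (t\<^sup>2 * Yu^4/8)) \<le> _\<close> t deriv_const_nonneg
      by (intro mult_left_mono) auto
    finally show ?thesis .
  qed
  from norm_K_t_le[OF r M this] have "norm (K_t a b t rho) \<le> 1/(sqrt 2 * pi) * (M * (100 / r\<^sup>2 * exp (- rho/2)))" .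
  also have "\<dots> \<le> 1/(sqrt 2 * pi) * (M * (100 / r\<^sup>2 * 1))"
    using M r by (intro mult_left_mono) auto
  also have "\<dots> = K_t_const * (t / r\<^sup>2 * (exp (- (t\<^sup>2 * (max (1/4 - b) 0)\<^sup>2)) * exp (- (t\<^sup>2 * Y^4/8))))"
    unfolding M_def K_t_const_def by (simp add: field_simps)
  also have "exp (- (t\<^sup>2 * (max (1/4 - b) 0)\<^sup>2)) * exp (- (t\<^sup>2 * Y^4/8))
      = exp (- (t\<^sup>2 * (max (1/4 - b) 0)\<^sup>2) - t\<^sup>2 * Y^4/8)"
    by (simp flip: exp_add)
  finally show ?thesis .
qed


lemma norm_K_t_le_if_large_rho:
  assumes r: "0 < r" "r < 3" "r \<le> rho" and large: "6 * t\<^sup>2 \<le> rho"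
  shows "norm (K_t a b t rho)
    \<le> K_t_const * (t / r\<^sup>2 * exp (- (t\<^sup>2 * (max (1/4 - b) 0)\<^sup>2) - rho powr (4/3) / (8 * t powr (2/3))))"
proof -
  obtain Y where Y: "0 < Y" "rho = t\<^sup>2 * Y^3" and scaling: "rho powr (4/3) / (8 * t powr (2/3)) = t\<^sup>2 * Y^4 / 8"
    using cube_root_scaling[of rho t] r t by auto
  have "0 < t\<^sup>2" using t by simp
  then have Y6: "6 \<le> Y^3" using large unfolding Y(2) by (simp add: mult.commute[of "t\<^sup>2"])
  show ?thesis
  proof (cases "30 \<le> Y^3")
    case True
    then show ?thesis unfolding scaling using norm_K_t_le_far[OF r Y(1) True Y(2)] by simp
  next
    case False
    have "t\<^sup>2 * (9/16 - (max (1/4 - b) 0)\<^sup>2) - rho/2 \<le> - (t\<^sup>2 * (max (1/4 - b) 0)\<^sup>2) - t\<^sup>2 * Y^4/8"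
      using mult_left_mono[OF cube_between_6_30_imp_exponent_le[OF Y(1) Y6], of "t\<^sup>2"] False
      unfolding Y(2) by (simp add: algebra_simps)
    then have "t / r\<^sup>2 * exp (t\<^sup>2 * (9/16 - (max (1/4 - b) 0)\<^sup>2) - rho/2)
        \<le> t / r\<^sup>2 * exp (- (t\<^sup>2 * (max (1/4 - b) 0)\<^sup>2) - t\<^sup>2 * Y^4/8)"
      using t by (intro mult_left_mono) auto
    from order_trans[OF norm_K_t_le_crude[OF r] mult_left_mono[OF this K_t_const_nonneg]]
    show ?thesis unfolding scaling by simp
  qed
qed

lemma norm_K_t_le_if_small_rho:
  assumes r: "0 < r" "r < 3" "r \<le> rho" and small: "rho \<le> 6 * t\<^sup>2"
  shows "norm (K_t a b t rho)
    \<le> K_t_const * (t / r\<^sup>2 * exp (- (t\<^sup>2 * (max (1/4 - b) 0)\<^sup>2) + t\<^sup>2 - rho powr (4/3) / (8 * t powr (2/3))))"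
proof -
  obtain Y where Y: "0 < Y" "rho = t\<^sup>2 * Y^3" and scaling: "rho powr (4/3) / (8 * t powr (2/3)) = t\<^sup>2 * Y^4 / 8"
    using cube_root_scaling[of rho t] r t by auto
  have "0 < t\<^sup>2" using t by simp
  then have "Y^3 \<le> 6" using small unfolding Y(2) by (simp add: mult.commute[of "t\<^sup>2"])
  then have "t\<^sup>2 * (9/16 - (max (1/4 - b) 0)\<^sup>2) - rho/2 \<le> - (t\<^sup>2 * (max (1/4 - b) 0)\<^sup>2) + t\<^sup>2 - t\<^sup>2 * Y^4/8"
    using mult_left_mono[OF cube_le_6_imp_exponent_le[OF Y(1)], of "t\<^sup>2"]
    unfolding Y(2) by (simp add: algebra_simps)
  then have "t / r\<^sup>2 * exp (t\<^sup>2 * (9/16 - (max (1/4 - b) 0)\<^sup>2) - rho/2)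
      \<le> t / r\<^sup>2 * exp (- (t\<^sup>2 * (max (1/4 - b) 0)\<^sup>2) + t\<^sup>2 - t\<^sup>2 * Y^4/8)"
    using t by (intro mult_left_mono) auto
  from order_trans[OF norm_K_t_le_crude[OF r] mult_left_mono[OF this K_t_const_nonneg]]
  show ?thesis unfolding scaling by simp
qed

end

theorem lemma3p6:
  shows "\<exists>C::real. \<forall>a b r rho t :: real.
     0 \<le> a \<and> a \<le> b \<and> b \<le> 1 \<and> 0 < r \<and> r < 3 \<and> rho \<ge> r \<and> t \<ge> 1/200 \<longrightarrow>
       (rho \<ge> 6 * t\<^sup>2 \<longrightarrow>
          cmod (K_t a b t rho) \<le> C * (t / r\<^sup>2 *
            exp (- (t\<^sup>2 * (max (1/4 - b) 0)\<^sup>2) - rho powr (4/3) / (8 * t powr (2/3))))) \<and>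
       (rho \<le> 6 * t\<^sup>2 \<longrightarrow>
          cmod (K_t a b t rho) \<le> C * (t / r\<^sup>2 *
            exp (- (t\<^sup>2 * (max (1/4 - b) 0)\<^sup>2) + t\<^sup>2 - rho powr (4/3) / (8 * t powr (2/3)))))"
  by (intro exI[of _ K_t_const] allI impI conjI)
    (blast intro: norm_K_t_le_if_large_rho norm_K_t_le_if_small_rho)+

end
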